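(* For all $n\ge2$ and $a>0$, $$\frac{d\mathsf p(n,a)}{da}=\frac{2e^{-a^2}P_n(a)P_{n-2}(a)}{h_{n-2}(a)}=a\,r_n(a)-\frac{n+r_n(a)}{2}R_n(a).$$
   Context: Fix $a>0$. Let $w(x)=e^{-x^2}\chi_{\mathbb{R}\setminus(-a,a)}(x)$. Let $P_n$ be the monic orthogonal polynomials for $w$, with $h_n=\int P_n^2w$, and write $P_n(x)=x^n+\mathsf p(n,a)x^{n-2}+\dots$. Define $$R_n(a)=\frac{2e^{-a^2}P_n(a)^2}{h_n(a)},\qquad r_n(a)=\frac{2e^{-a^2}P_n(a)P_{n-1}(a)}{h_{n-1}(a)}.$$ *)

theory Defs
  imports "HOL-Analysis.Analysis" "HOL-Computational_Algebra.Polynomial"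
begin

definition wt :: "real \<Rightarrow> real \<Rightarrow> real" where
  "wt a x = exp (- (x^2)) * indicator (UNIV - {-a<..<a}) x"

definition OP :: "real \<Rightarrow> nat \<Rightarrow> real poly" where
  "OP a n = (THE p. degree p = n \<and> lead_coeff p = 1 \<and>
      (\<forall>k<n. (LINT x|lborel. poly p x * x ^ k * wt a x) = 0))"

definition hn :: "real \<Rightarrow> nat \<Rightarrow> real" where
  "hn a n = (LINT x|lborel. (poly (OP a n) x)^2 * wt a x)"

definition pco :: "nat \<Rightarrow> real \<Rightarrow> real" where
  "pco n a = coeff (OP a n) (n - 2)"

definition Rn :: "nat \<Rightarrow> real \<Rightarrow> real" where
  "Rn n a = 2 * exp (- (a^2)) * (poly (OP a n) a)^2 / hn a n"

definition rn :: "nat \<Rightarrow> real \<Rightarrow> real" where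
  "rn n a = 2 * exp (- (a^2)) * poly (OP a n) a * poly (OP a (n - 1)) a / hn a (n - 1)"

end

theory Submission
  imports Defs "HOL-Probability.Distributions"
begin

(* The monic orthogonal polynomials are realised concretely by Gram-Schmidt
   orthogonalisation GS b n of the monomials w.r.t. the inner product ip b;
   by uniqueness GS b n = OP b n.  Everything is then reduced to the moments
   mom b k = int x^k w_b(x) dx, for which we prove
     (i)  d/db mom b k = -e^{-b^2} (b^k + (-b)^k)      (fundamental theorem), and
     (ii) (k+1) mom b k = 2 mom b (k+2) + e^{-b^2}((-b)^(k+1) - b^(k+1))
          (integration by parts), giving int p' w = int 2xp w + boundary terms.
   From (i) the coefficients of GS b n are differentiable in b; differentiating
   the orthogonality relations yields the inner products of the derivative
   polynomial d/db GS b n against all lower-degree polynomials, and with the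
   parity of GS this gives the first equality.  From (ii) and orthogonality we
   get the three-term relation and the norm recursion
     2 h_n = n h_{n-1} + 2 e^{-a^2} P_n(a) P_{n-1}(a),
   from which the second equality is pure algebra. *)

lemma gaussian_moment_integrable: "integrable lborel (\<lambda>x::real. exp (- x\<^sup>2) * x ^ k)"
proof (cases "even k")
  case True
  then obtain j where k: "k = 2*j" by (auto elim: evenE)
  have "has_bochner_integral lborel (\<lambda>x::real. exp (- x\<^sup>2) * x ^ (2*j))
          (2 *\<^sub>R ((sqrt pi / 2) * (fact (2 * j) / (2 ^ (2 * j) * fact j))))"
    by (rule has_bochner_integral_even_function[OF gaussian_moment_even_pos]) (simp add: power_mult)
  then show ?thesis using k by (auto dest: integrable.intros)
next
  case False
  then obtain j where k: "k = 2*j+1" by (auto elim: oddE)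
  have "has_bochner_integral lborel (\<lambda>x::real. exp (- x\<^sup>2) * x ^ (2*j+1)) 0"
    by (rule has_bochner_integral_odd_function[OF gaussian_moment_odd_pos]) (simp add: power_mult)
  then show ?thesis using k by (auto dest: integrable.intros)
qed

lemma gaussian_moment_integrable_reflected: "integrable lborel (\<lambda>x::real. exp (- x\<^sup>2) * (- x) ^ k)"
  using lborel_integrable_real_affine[OF gaussian_moment_integrable[of k], of "-1" 0] by simp

lemma wt_measurable[measurable]: "(\<lambda>x. wt b x) \<in> borel_measurable borel"
  unfolding wt_def by measurable

lemma wt_nonneg: "wt b x \<ge> 0"
  unfolding wt_def by (simp split: split_indicator)

lemma wt_even: "wt b (- x) = wt b x"
  unfolding wt_def by (auto split: split_indicator)

lemma integrable_monomial_wt: "integrable lborel (\<lambda>x::real. x ^ k * wt b x)"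
proof -
  have "integrable lborel (\<lambda>x::real. (exp (- x\<^sup>2) * x ^ k) * indicator (UNIV - {-b<..<b}) x)"
    by (rule integrable_real_mult_indicator) (auto intro: gaussian_moment_integrable)
  then show ?thesis unfolding wt_def by (simp add: ac_simps)
qed

lemma integrable_poly_wt: "integrable lborel (\<lambda>x::real. poly p x * wt b x)"
proof -
  have "integrable lborel (\<lambda>x::real. \<Sum>i\<le>degree p. coeff p i * (x ^ i * wt b x))"
    by (intro Bochner_Integration.integrable_sum Bochner_Integration.integrable_mult_right
        integrable_monomial_wt)
  then show ?thesis by (simp add: poly_altdef sum_distrib_left sum_distrib_right ac_simps)
qed

lemma lint_reflect: "(LINT x|lborel. f (- x)) = (LINT x|lborel. (f (x::real) :: real))"
  using lborel_integral_real_affine[of "-1" f 0] by simp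

lemma lint_odd: assumes "\<And>x. f (- x) = - f x" shows "(LINT x|lborel. (f (x::real) :: real)) = 0"
proof -
  have "(LINT x|lborel. f x) = (LINT x|lborel. f (- x))" by (rule lint_reflect[symmetric])
  also have "\<dots> = - (LINT x|lborel. f x)" by (simp add: assms)
  finally show ?thesis by simp
qed

lemma poly_as_sum_upto: fixes p :: "real poly" assumes "degree p \<le> N"
  shows "poly p x = (\<Sum>i\<le>N. coeff p i * x ^ i)"
proof -
  have "poly p x = poly (\<Sum>i\<le>N. monom (coeff p i) i) x" using poly_as_sum_of_monoms'[OF assms] by simp
  also have "\<dots> = (\<Sum>i\<le>N. coeff p i * x ^ i)" by (simp add: poly_sum poly_monom)
  finally show ?thesis .
qed

definition ip :: "real \<Rightarrow> real poly \<Rightarrow> real poly \<Rightarrow> real" where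
  "ip b p q = (LINT x|lborel. poly p x * poly q x * wt b x)"

definition mom :: "real \<Rightarrow> nat \<Rightarrow> real" where
  "mom b k = (LINT x|lborel. x ^ k * wt b x)"

lemma integrable_ip: "integrable lborel (\<lambda>x::real. poly p x * poly q x * wt b x)"
  using integrable_poly_wt[of "p*q" b] by simp

lemma ip_sym: "ip b p q = ip b q p"
  unfolding ip_def by (simp add: ac_simps)

lemma ip_add_right: "ip b p (q + r) = ip b p q + ip b p r"
proof -
  have "ip b p (q + r) = (LINT x|lborel. poly p x * poly q x * wt b x + poly p x * poly r x * wt b x)"
    unfolding ip_def by (simp add: algebra_simps)
  also have "\<dots> = ip b p q + ip b p r"
    unfolding ip_def by (rule Bochner_Integration.integral_add[OF integrable_ip integrable_ip])
  finally show ?thesis .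
qed

lemma ip_smult_right: "ip b p (smult c q) = c * ip b p q"
proof -
  have "ip b p (smult c q) = (LINT x|lborel. c * (poly p x * poly q x * wt b x))"
    unfolding ip_def by (simp add: algebra_simps)
  then show ?thesis unfolding ip_def by simp
qed

lemma ip_diff_right: "ip b p (q - r) = ip b p q - ip b p r"
  using ip_add_right[of b p q "-r"] ip_smult_right[of b p "-1" r] by simp

lemma ip_zero[simp]: "ip b 0 p = 0" "ip b p 0 = 0"
  by (simp_all add: ip_def)

lemma ip_sum_right: "ip b p (\<Sum>j\<in>A. f j) = (\<Sum>j\<in>A. ip b p (f j))"
  by (induction A rule: infinite_finite_induct) (simp_all add: ip_add_right)

lemma ip_add_left: "ip b (q + r) p = ip b q p + ip b r p"
  by (metis ip_add_right ip_sym)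

lemma ip_smult_left: "ip b (smult c q) p = c * ip b q p"
  by (metis ip_smult_right ip_sym)

lemma ip_diff_left: "ip b (q - r) p = ip b q p - ip b r p"
  by (metis ip_diff_right ip_sym)

lemma ip_sum_left: "ip b (\<Sum>j\<in>A. f j) p = (\<Sum>j\<in>A. ip b (f j) p)"
  by (simp add: ip_sym[of b _ p] ip_sum_right)

lemma ip_mult_one: "ip b (p * q) 1 = ip b p q"
  unfolding ip_def by simp

lemma ip_shift: "ip b (pCons 0 p) q = ip b p (pCons 0 q)"
  unfolding ip_def by (simp add: ac_simps)

text \<open>The weight is positive on a set of positive measure, so \<open>ip b\<close> is definite.\<close>
lemma ip_pos: assumes "p \<noteq> 0" shows "ip b p p > 0"
proof (rule ccontr)
  assume "\<not> ip b p p > 0"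
  moreover have "ip b p p \<ge> 0"
    unfolding ip_def by (intro integral_nonneg_AE AE_I2 mult_nonneg_nonneg zero_le_square wt_nonneg)
  ultimately have "ip b p p = 0" by linarith
  then have AE_zero: "AE x in lborel. poly p x * poly p x * wt b x = 0"
    unfolding ip_def
    by (subst (asm) integral_nonneg_eq_0_iff_AE)
       (auto intro!: integrable_ip mult_nonneg_nonneg zero_le_square wt_nonneg)
  have "{x. poly p x = 0} \<in> null_sets lborel"
    using poly_roots_finite[OF assms] by (intro countable_imp_null_set_lborel countable_finite)
  then have AE_nonroot: "AE x in lborel. poly p x \<noteq> 0"
    by (rule AE_not_in[THEN eventually_mono]) simp
  define c where "c = \<bar>b\<bar> + 1"
  have "AE x in lborel. x \<notin> {c..c+1}"
    using AE_zero AE_nonroot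
  proof eventually_elim
    case (elim x)
    show ?case
    proof
      assume "x \<in> {c..c+1}"
      then have "x \<notin> {-b<..<b}" unfolding c_def by auto
      then have "wt b x > 0" unfolding wt_def by simp
      with elim show False by simp
    qed
  qed
  then have "emeasure lborel {c..c+1} = 0"
    by (subst (asm) AE_iff_measurable[of "{c..c+1}"]) auto
  then show False by simp
qed

lemma ip_monom: assumes "degree p \<le> N"
  shows "ip b p (monom 1 k) = (\<Sum>i\<le>N. coeff p i * mom b (i+k))"
proof -
  have "ip b p (monom 1 k) = (LINT x|lborel. (\<Sum>i\<le>N. coeff p i * (x ^ (i+k) * wt b x)))"
    unfolding ip_def using assms
    by (simp add: poly_as_sum_upto[of p N] poly_monom sum_distrib_left sum_distrib_right power_add ac_simps)
  also have "\<dots> = (\<Sum>i\<le>N. coeff p i * mom b (i+k))"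
    unfolding mom_def
    by (subst Bochner_Integration.integral_sum)
       (auto intro!: integrable_monomial_wt)
  finally show ?thesis .
qed

lemma ip_monom_one: "ip b (monom c m) 1 = c * mom b m"
  unfolding ip_def mom_def by (simp add: poly_monom mult.assoc)

lemma ip_expand_right: assumes "degree q \<le> N"
  shows "ip b p q = (\<Sum>k\<le>N. coeff q k * ip b p (monom 1 k))"
proof -
  have "q = (\<Sum>k\<le>N. smult (coeff q k) (monom 1 k))"
    using poly_as_sum_of_monoms'[OF assms] by (simp add: smult_monom)
  then have "ip b p q = ip b p (\<Sum>k\<le>N. smult (coeff q k) (monom 1 k))" by simp
  also have "\<dots> = (\<Sum>k\<le>N. coeff q k * ip b p (monom 1 k))"
    by (simp add: ip_sum_right ip_smult_right)
  finally show ?thesis .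
qed

lemma ip_coeffs: assumes "degree p \<le> N" "degree q \<le> N"
  shows "ip b p q = (\<Sum>j\<le>N. \<Sum>i\<le>N. coeff q j * coeff p i * mom b (i+j))"
  using ip_expand_right[OF assms(2), of b p] ip_monom[OF assms(1), of b]
  by (simp add: sum_distrib_left mult.assoc)

text \<open>Gram-Schmidt orthogonalisation of the monomials: an explicit construction of the monic
  orthogonal polynomials, whose coefficients are rational functions of the moments.\<close>

fun GS :: "real \<Rightarrow> nat \<Rightarrow> real poly" where
  "GS b n = monom 1 n - (\<Sum>j<n. smult (ip b (monom 1 n) (GS b j) / ip b (GS b j) (GS b j)) (GS b j))"

declare GS.simps[simp del]

lemma GS_monic: "degree (GS b n) = n \<and> coeff (GS b n) n = 1"
proof (induction n rule: less_induct)
  case (less n)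
  define S where "S = (\<Sum>j<n. smult (ip b (monom 1 n) (GS b j) / ip b (GS b j) (GS b j)) (GS b j))"
  have GS_eq: "GS b n = monom 1 n - S" unfolding S_def by (subst GS.simps) simp
  have coeff_S: "coeff S i = 0" if "i \<ge> n" for i
  proof -
    have "coeff (GS b j) i = 0" if "j < n" for j
      using less[OF that] that \<open>i \<ge> n\<close> by (intro coeff_eq_0) auto
    then show ?thesis unfolding S_def by (simp add: coeff_sum)
  qed
  have lead: "coeff (GS b n) n = 1" using coeff_S[of n] by (simp add: GS_eq)
  have "degree (GS b n) \<le> n"
    by (rule degree_le) (use coeff_S in \<open>auto simp: GS_eq\<close>)
  moreover have "n \<le> degree (GS b n)" by (rule le_degree) (simp add: lead)
  ultimately show ?case using lead by simp
qed

lemma GS_degree[simp]: "degree (GS b n) = n" using GS_monic by blast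
lemma GS_lead[simp]: "coeff (GS b n) n = 1" using GS_monic by blast
lemma GS_nonzero: "GS b n \<noteq> 0" using GS_lead[of b n] by (metis coeff_0 zero_neq_one)
lemma GS_norm_pos: "ip b (GS b n) (GS b n) > 0" using ip_pos[OF GS_nonzero] .

lemma GS_ortho: "j < n \<Longrightarrow> ip b (GS b n) (GS b j) = 0"
proof (induction n arbitrary: j rule: less_induct)
  case (less n)
  define c where "c i = ip b (monom 1 n) (GS b i) / ip b (GS b i) (GS b i)" for i
  have GS_eq: "GS b n = monom 1 n - (\<Sum>i<n. smult (c i) (GS b i))"
    unfolding c_def by (subst GS.simps) simp
  have "ip b (GS b i) (GS b j) = 0" if "i < n" "i \<noteq> j" for i
    using that less.IH[of i j] less.IH[of j i] less.prems by (cases "j < i") (auto simp: ip_sym)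
  then have "(\<Sum>i<n. c i * ip b (GS b i) (GS b j)) = (\<Sum>i<n. if i = j then c j * ip b (GS b j) (GS b j) else 0)"
    by (intro sum.cong) auto
  also have "\<dots> = ip b (monom 1 n) (GS b j)"
    unfolding c_def using less.prems GS_norm_pos[of b j] by simp
  finally show ?case by (simp add: GS_eq ip_diff_left ip_sum_left ip_smult_left)
qed

lemma GS_ortho_low: "degree p < n \<Longrightarrow> ip b (GS b n) p = 0"
proof (induction "degree p" arbitrary: p rule: less_induct)
  case less
  define q where "q = p - smult (coeff p (degree p)) (GS b (degree p))"
  have "degree q \<le> degree p"
    unfolding q_def by (intro degree_diff_le) (auto intro: order.trans[OF degree_smult_le])
  moreover have "coeff q (degree p) = 0" unfolding q_def by simp
  ultimately have "q = 0 \<or> degree q < degree p"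
    by (metis leading_coeff_0_iff le_neq_implies_less)
  then have "ip b (GS b n) q = 0" using less by auto
  moreover have "p = q + smult (coeff p (degree p)) (GS b (degree p))" unfolding q_def by simp
  ultimately show ?case
    using GS_ortho[of "degree p" n b] less.prems by (metis add.left_neutral ip_add_right ip_smult_right mult_zero_right)
qed

lemma GS_component: "degree R \<le> m \<Longrightarrow> ip b R (GS b m) = coeff R m * ip b (GS b m) (GS b m)"
proof -
  assume dR: "degree R \<le> m"
  define q where "q = R - smult (coeff R m) (GS b m)"
  have "degree q \<le> m"
    unfolding q_def using dR by (intro degree_diff_le) (auto intro: order.trans[OF degree_smult_le])
  moreover have "coeff q m = 0" unfolding q_def by simp
  ultimately have "q = 0 \<or> degree q < m" by (metis leading_coeff_0_iff le_neq_implies_less)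
  then have "ip b q (GS b m) = 0" using GS_ortho_low[of q m b] by (auto simp: ip_sym)
  moreover have "R = q + smult (coeff R m) (GS b m)" unfolding q_def by simp
  ultimately show ?thesis by (metis add.left_neutral ip_add_left ip_smult_left)
qed

lemma GS_complete: "degree R \<le> m \<Longrightarrow> (\<forall>j\<le>m. ip b R (GS b j) = 0) \<Longrightarrow> R = 0"
proof (induction m arbitrary: R)
  case 0
  then have "coeff R 0 = 0" using GS_component[of R 0 b] GS_norm_pos[of b 0] by simp
  then show ?case using 0 by (metis leading_coeff_0_iff le_zero_eq)
next
  case (Suc m)
  then have top: "coeff R (Suc m) = 0"
    using GS_component[of R "Suc m" b] GS_norm_pos[of b "Suc m"] by simp
  have "degree R \<le> m"
  proof (rule degree_le, intro allI impI)
    fix i assume "m < i"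
    then have "i = Suc m \<or> i > Suc m" by auto
    then show "coeff R i = 0" using top Suc.prems by (auto intro: coeff_eq_0)
  qed
  then show ?case using Suc by auto
qed

definition isOP :: "real \<Rightarrow> nat \<Rightarrow> real poly \<Rightarrow> bool" where
  "isOP a n p \<longleftrightarrow> degree p = n \<and> lead_coeff p = 1 \<and>
      (\<forall>k<n. (LINT x|lborel. poly p x * x ^ k * wt a x) = 0)"

lemma lint_monom_ip: "(LINT x|lborel. poly p x * x ^ k * wt a x) = ip a p (monom 1 k)"
  unfolding ip_def by (simp add: poly_monom)

lemma isOP_GS: "isOP b n (GS b n)"
  unfolding isOP_def lint_monom_ip by (auto intro!: GS_ortho_low simp: degree_monom_eq)

lemma isOP_unique: assumes "isOP b n p" shows "p = GS b n"
proof -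
  define d where "d = p - GS b n"
  have "degree d \<le> n" unfolding d_def using assms unfolding isOP_def by (auto intro: degree_diff_le)
  moreover have "coeff d n = 0" unfolding d_def using assms unfolding isOP_def by auto
  ultimately have "d = 0 \<or> degree d < n" by (metis leading_coeff_0_iff le_neq_implies_less)
  moreover have "ip b d d = 0" if "degree d < n"
  proof -
    have "ip b p d = (\<Sum>k\<le>degree d. coeff d k * ip b p (monom 1 k))" by (rule ip_expand_right) simp
    also have "\<dots> = 0" using assms that unfolding isOP_def lint_monom_ip by (intro sum.neutral) auto
    finally show ?thesis using GS_ortho_low[OF that, of b] by (simp add: d_def ip_diff_left)
  qed
  ultimately have "d = 0" using ip_pos[of d b] by linarith
  then show ?thesis unfolding d_def by simp
qed

lemma OP_eq_GS: "OP b n = GS b n"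
  unfolding OP_def isOP_def[symmetric] using isOP_GS isOP_unique by blast

text \<open>Since the weight is even, \<open>GS b n\<close> has the parity of \<open>n\<close> (again by uniqueness).\<close>
lemma GS_parity: "poly (GS b n) (- x) = (-1) ^ n * poly (GS b n) x"
proof -
  define q where "q = smult ((-1) ^ n) (GS b n \<circ>\<^sub>p [:0, -1:])"
  have poly_q: "poly q x = (-1) ^ n * poly (GS b n) (- x)" for x
    unfolding q_def by (simp add: poly_pcompose)
  have "isOP b n q"
    unfolding isOP_def
  proof (intro conjI allI impI)
    show deg: "degree q = n" unfolding q_def by (simp add: degree_pcompose)
    have "lead_coeff (GS b n \<circ>\<^sub>p [:0, -1:]) = lead_coeff (GS b n) * lead_coeff [:0, -1::real:] ^ degree (GS b n)"
      by (rule lead_coeff_comp) simp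
    then show "lead_coeff q = 1" using deg unfolding q_def
      by (simp add: degree_pcompose flip: power_mult_distrib)
    fix k assume k: "k < n"
    have "(LINT x|lborel. poly q x * x ^ k * wt b x)
        = (-1) ^ n * (LINT x|lborel. poly (GS b n) (- x) * (- (- x)) ^ k * wt b (- x))"
      by (simp add: poly_q wt_even mult.assoc)
    also have "(LINT x|lborel. poly (GS b n) (- x) * (- (- x)) ^ k * wt b (- x))
             = (LINT x|lborel. poly (GS b n) x * (- x) ^ k * wt b x)"
      by (rule lint_reflect[where f = "\<lambda>x. poly (GS b n) x * (- x) ^ k * wt b x"])
    also have "\<dots> = (-1) ^ k * (LINT x|lborel. poly (GS b n) x * x ^ k * wt b x)"
    proof -
      have "\<And>x. poly (GS b n) x * (- x) ^ k * wt b x = (-1) ^ k * (poly (GS b n) x * x ^ k * wt b x)"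
        by (subst power_minus) simp
      then show ?thesis by (simp only: integral_mult_right_zero)
    qed
    also have "(LINT x|lborel. poly (GS b n) x * x ^ k * wt b x) = 0"
      using isOP_GS[of b n] k unfolding isOP_def by blast
    finally show "(LINT x|lborel. poly q x * x ^ k * wt b x) = 0" by simp
  qed
  then have "q = GS b n" by (rule isOP_unique)
  have "(-1::real) ^ n * (-1) ^ n = 1" by (simp flip: power_mult_distrib)
  then have "poly (GS b n) (- x) = (-1) ^ n * poly q x" by (simp add: poly_q mult.assoc[symmetric])
  with \<open>q = GS b n\<close> show ?thesis by simp
qed

lemma sign_pow_diff_odd: assumes "m \<ge> 1" shows "(-1::real) ^ m * (-1) ^ (m - 1) = -1"
proof -
  have "m + (m - 1) = Suc (2 * (m - 1))" using assms by simp
  then show ?thesis by (simp flip: power_add add: power_mult)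
qed

lemma sign_pow_diff_even: assumes "m \<ge> 2" shows "(-1::real) ^ m * (-1) ^ (m - 2) = 1"
proof -
  have "m + (m - 2) = 2 * (m - 1)" using assms by simp
  then show ?thesis by (simp flip: power_add add: power_mult)
qed

text \<open>Writing
  \<open>sym_gauss k x = e^{-x^2} (x^k + (-x)^k)\<close>, for \<open>b > 0\<close> we have
  \<open>mom b k = half_moment k - \<integral>\<^sub>0\<^sup>b sym_gauss k\<close>.\<close>

definition sym_gauss :: "nat \<Rightarrow> real \<Rightarrow> real" where
  "sym_gauss k x = exp (- x\<^sup>2) * (x ^ k + (- x) ^ k)"

definition half_moment :: "nat \<Rightarrow> real" where
  "half_moment k = (LINT x|lborel. indicator {0..} x * sym_gauss k x)"

lemma sym_gauss_measurable[measurable]: "sym_gauss k \<in> borel_measurable borel"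
  unfolding sym_gauss_def by measurable

lemma sym_gauss_continuous: "continuous_on S (sym_gauss k)"
  unfolding sym_gauss_def by (intro continuous_intros)

lemma integrable_indicator_sym_gauss:
  assumes "S \<in> sets borel" shows "integrable lborel (\<lambda>x. indicator S x * sym_gauss k x)"
proof -
  have "integrable lborel (\<lambda>x::real. exp (- x\<^sup>2) * x ^ k + exp (- x\<^sup>2) * (- x) ^ k)"
    by (intro Bochner_Integration.integrable_add gaussian_moment_integrable
        gaussian_moment_integrable_reflected)
  moreover have "sym_gauss k = (\<lambda>x::real. exp (- x\<^sup>2) * x ^ k + exp (- x\<^sup>2) * (- x) ^ k)"
    by (simp add: sym_gauss_def fun_eq_iff distrib_left)
  ultimately have "integrable lborel (sym_gauss k)" by simp
  then show ?thesis using integrable_mult_indicator[of S lborel "sym_gauss k"] assms by simp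
qed

lemma integrable_indicator_gaussian_moment:
  assumes "S \<in> sets borel" shows "integrable lborel (\<lambda>x::real. indicator S x * (exp (- x\<^sup>2) * x ^ k))"
  using integrable_mult_indicator[of S lborel "\<lambda>x. exp (- x\<^sup>2) * x ^ k"] gaussian_moment_integrable assms
  by simp

text \<open>Folding the two half-lines \<open>(-\<infinity>, -b]\<close> and \<open>[b, \<infinity>)\<close> onto one.\<close>
lemma mom_fold: assumes b: "b > 0" shows "mom b k = (LINT x|lborel. indicator {b..} x * sym_gauss k x)"
proof -
  have split: "x ^ k * wt b x = indicator {b..} x * (exp (- x\<^sup>2) * x ^ k) + indicator {..-b} x * (exp (- x\<^sup>2) * x ^ k)" for x
    unfolding wt_def using b by (auto split: split_indicator)
  have "mom b k = (LINT x|lborel. indicator {b..} x * (exp (- x\<^sup>2) * x ^ k))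
                + (LINT x|lborel. indicator {..-b} x * (exp (- x\<^sup>2) * x ^ k))"
    unfolding mom_def split
    by (rule Bochner_Integration.integral_add) (auto intro!: integrable_indicator_gaussian_moment)
  also have "(LINT x|lborel. indicator {..-b} x * (exp (- x\<^sup>2) * x ^ k))
           = (LINT x|lborel. indicator {b..} x * (exp (- x\<^sup>2) * (-x) ^ k))"
    by (subst lint_reflect[where f = "\<lambda>x. indicator {..-b} x * (exp (- x\<^sup>2) * x ^ k)", symmetric])
       (auto intro!: Bochner_Integration.integral_cong split: split_indicator)
  also have "(LINT x|lborel. indicator {b..} x * (exp (- x\<^sup>2) * x ^ k)) + \<dots>
           = (LINT x|lborel. indicator {b..} x * (exp (- x\<^sup>2) * x ^ k) + indicator {b..} x * (exp (- x\<^sup>2) * (-x) ^ k))"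
  proof (rule Bochner_Integration.integral_add[symmetric])
    show "integrable lborel (\<lambda>x. indicator {b..} x * (exp (- x\<^sup>2) * (-x) ^ k))"
      using integrable_mult_indicator[of "{b..}" lborel "\<lambda>x. exp (- x\<^sup>2) * (- x) ^ k"]
        gaussian_moment_integrable_reflected by simp
  qed (auto intro!: integrable_indicator_gaussian_moment)
  also have "\<dots> = (LINT x|lborel. indicator {b..} x * sym_gauss k x)"
    by (simp add: sym_gauss_def algebra_simps)
  finally show ?thesis .
qed

lemma mom_eq_half_moment_minus: assumes b: "b > 0"
  shows "mom b k = half_moment k - integral {0..b} (sym_gauss k)"
proof -
  have "set_integrable lborel {0..b} (sym_gauss k)"
    by (rule borel_integrable_atLeastAtMost') (rule sym_gauss_continuous)
  from set_borel_integral_eq_integral(2)[OF this]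
  have Icc: "(LINT x|lborel. indicator {0..b} x * sym_gauss k x) = integral {0..b} (sym_gauss k)"
    by (simp add: set_lebesgue_integral_def)
  have "AE x in lborel. indicator {0..} x * sym_gauss k x
          = indicator {0..b} x * sym_gauss k x + indicator {b..} x * sym_gauss k x"
    using AE_lborel_singleton[of b] by eventually_elim (use b in \<open>auto split: split_indicator\<close>)
  then have "half_moment k = (LINT x|lborel. indicator {0..b} x * sym_gauss k x + indicator {b..} x * sym_gauss k x)"
    unfolding half_moment_def by (intro integral_cong_AE) auto
  also have "\<dots> = (LINT x|lborel. indicator {0..b} x * sym_gauss k x) + (LINT x|lborel. indicator {b..} x * sym_gauss k x)"
    by (rule Bochner_Integration.integral_add) (auto intro!: integrable_indicator_sym_gauss)
  finally show ?thesis using mom_fold[OF b, of k] Icc by simp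
qed

lemma mom_deriv: assumes a: "a > 0" shows "((\<lambda>b. mom b k) has_real_derivative - sym_gauss k a) (at a)"
proof -
  have "((\<lambda>b. integral {0..b} (sym_gauss k)) has_real_derivative sym_gauss k a) (at a within {0..a+1})"
    by (rule integral_has_real_derivative) (use a in \<open>auto intro: sym_gauss_continuous\<close>)
  moreover have "a \<in> interior {0..a+1}" using a by simp
  ultimately have "((\<lambda>b. integral {0..b} (sym_gauss k)) has_real_derivative sym_gauss k a) (at a)"
    using at_within_interior by metis
  from DERIV_diff[OF DERIV_const this]
  have diff: "((\<lambda>b. half_moment k - integral {0..b} (sym_gauss k)) has_real_derivative - sym_gauss k a) (at a)"
    by simp
  have "\<forall>\<^sub>F b in nhds a. mom b k = half_moment k - integral {0..b} (sym_gauss k)"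
    using eventually_nhds_in_open[of "{0<..}" a] a by (auto elim!: eventually_mono intro: mom_eq_half_moment_minus)
  from DERIV_cong_ev[OF refl this refl] diff show ?thesis by simp
qed

lemma mom_differentiable: "a > 0 \<Longrightarrow> (\<lambda>b. mom b k) differentiable (at a)"
  using mom_deriv[of a k] by (auto intro: differentiableI has_field_derivative_imp_has_derivative)

lemma mom_odd: "odd k \<Longrightarrow> mom b k = 0"
  unfolding mom_def by (rule lint_odd) (simp add: wt_even)

lemma half_moment_rec: "real (Suc k) * half_moment k = 2 * half_moment (k+2)"
proof (cases "even k")
  case False
  then have "sym_gauss k = (\<lambda>_. 0)" "sym_gauss (k+2) = (\<lambda>_. 0)"
    by (auto simp: sym_gauss_def fun_eq_iff)
  then show ?thesis by (simp add: half_moment_def)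
next
  case True
  then obtain j where k: "k = 2*j" by (auto elim: evenE)
  have closed_form: "half_moment (2*i) = sqrt pi * (fact (2 * i) / (2 ^ (2 * i) * fact i))" for i
  proof -
    have "half_moment (2*i) = (LINT x|lborel. 2 * (indicator {0..} x *\<^sub>R (exp (-x\<^sup>2) * x ^ (2 * i))))"
      unfolding half_moment_def sym_gauss_def
      by (intro Bochner_Integration.integral_cong refl) (simp add: power_mult)
    then show ?thesis using has_bochner_integral_integral_eq[OF gaussian_moment_even_pos[of i]] by simp
  qed
  have cancel: "2 * (s * (2 * (x + 1) * (2 * x + 1) * F / (4 * P * ((x + 1) * G))))
              = (2 * x + 1) * (s * (F / (P * G)))" if "x + 1 > 0" "G > 0" "P > 0" for s x F G P :: real
  proof -
    have "2 * (x + 1) * (2 * x + 1) * F / (4 * P * ((x + 1) * G))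
        = (2 * (x + 1) * ((2 * x + 1) * F)) / (2 * (x + 1) * (2 * P * G))"
      by (intro arg_cong2[where f = "(/)"]) (simp_all add: algebra_simps)
    also have "\<dots> = (2 * x + 1) * F / (2 * P * G)"
      using that by (intro mult_divide_mult_cancel_left) simp
    finally have "2 * (x + 1) * (2 * x + 1) * F / (4 * P * ((x + 1) * G)) = (2 * x + 1) * F / (2 * P * G)" .
    then show ?thesis using that by (simp only:) (simp add: field_simps)
  qed
  have "fact (2 * Suc j) = (2 * (real j + 1)) * (2 * real j + 1) * (fact (2 * j) :: real)"
    by (simp add: algebra_simps)
  moreover have "(fact (Suc j) :: real) = (real j + 1) * fact j" by simp
  moreover have "(2::real) ^ (2 * Suc j) = 4 * 2 ^ (2 * j)" by (simp add: power_mult)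
  ultimately have "2 * half_moment (2 * Suc j) = (2 * real j + 1) * half_moment (2 * j)"
    unfolding closed_form by (simp only:) (rule cancel; simp)
  then show ?thesis using k by simp
qed

lemma sym_gauss_boundary_deriv:
  "((\<lambda>x::real. exp (- x\<^sup>2) * (x ^ Suc k - (- x) ^ Suc k)) has_real_derivative
     (real (Suc k) * sym_gauss k x - 2 * sym_gauss (k+2) x)) (at x)"
proof -
  define s :: real where "s = 1 - (-1) ^ Suc k"
  have "(\<lambda>x::real. exp (- x\<^sup>2) * (x ^ Suc k - (- x) ^ Suc k)) = (\<lambda>x. exp (- x\<^sup>2) * (s * x ^ Suc k))"
  proof
    fix x :: real
    have "(- x) ^ Suc k = (-1) ^ Suc k * x ^ Suc k" by (rule power_minus)
    then show "exp (- x\<^sup>2) * (x ^ Suc k - (- x) ^ Suc k) = exp (- x\<^sup>2) * (s * x ^ Suc k)"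
      unfolding s_def by (simp only:) (simp add: algebra_simps)
  qed
  moreover have "((\<lambda>x::real. exp (- x\<^sup>2) * (s * x ^ Suc k)) has_real_derivative
      exp (- x\<^sup>2) * (- 2 * x) * (s * x ^ Suc k) + (s * (real (Suc k) * x ^ k)) * exp (- x\<^sup>2)) (at x)"
  proof (rule DERIV_mult[OF _ DERIV_cmult])
    show "((\<lambda>x::real. exp (- x\<^sup>2)) has_real_derivative exp (- x\<^sup>2) * (- 2 * x)) (at x)"
      by (auto intro!: derivative_eq_intros)
    show "((\<lambda>x::real. x ^ Suc k) has_real_derivative real (Suc k) * x ^ k) (at x)"
      using DERIV_pow[of "Suc k" x] by simp
  qed
  moreover have "exp (- x\<^sup>2) * (- 2 * x) * (s * x ^ Suc k) + (s * (real (Suc k) * x ^ k)) * exp (- x\<^sup>2)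
               = real (Suc k) * sym_gauss k x - 2 * sym_gauss (k+2) x"
    unfolding sym_gauss_def s_def power_minus[of x k] power_minus[of x "k+2"]
    by (simp add: algebra_simps power2_eq_square)
  ultimately show ?thesis by simp
qed

lemma sym_gauss_integral_rec: assumes b: "b \<ge> 0"
  shows "real (Suc k) * integral {0..b} (sym_gauss k) - 2 * integral {0..b} (sym_gauss (k+2))
       = exp (- b\<^sup>2) * (b ^ Suc k - (- b) ^ Suc k)"
proof -
  define F where "F x = exp (- x\<^sup>2) * (x ^ Suc k - (- x) ^ Suc k)" for x :: real
  have "((\<lambda>x. real (Suc k) * sym_gauss k x - 2 * sym_gauss (k+2) x) has_integral (F b - F 0)) {0..b}"
  proof (rule fundamental_theorem_of_calculus[OF b])
    fix x assume "x \<in> {0..b}"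
    show "(F has_vector_derivative real (Suc k) * sym_gauss k x - 2 * sym_gauss (k+2) x) (at x within {0..b})"
      using has_field_derivative_at_within[OF sym_gauss_boundary_deriv]
      unfolding F_def has_real_derivative_iff_has_vector_derivative .
  qed
  moreover have "((\<lambda>x. real (Suc k) * sym_gauss k x - 2 * sym_gauss (k+2) x) has_integral
      (real (Suc k) * integral {0..b} (sym_gauss k) - 2 * integral {0..b} (sym_gauss (k+2)))) {0..b}"
    by (intro has_integral_diff has_integral_mult_right integrable_integral
        integrable_continuous_real sym_gauss_continuous)
  ultimately show ?thesis unfolding F_def by (simp add: has_integral_unique)
qed

text \<open>(ii) The moment recursion (integration by parts against \<open>e^{-x^2}\<close>).\<close>
lemma mom_rec: assumes b: "b > 0"
  shows "real (Suc k) * mom b k = 2 * mom b (k+2) + exp (- b\<^sup>2) * ((- b) ^ Suc k - b ^ Suc k)"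
proof -
  have "real (Suc k) * mom b k = real (Suc k) * half_moment k - real (Suc k) * integral {0..b} (sym_gauss k)"
    using mom_eq_half_moment_minus[OF b, of k] by (simp add: right_diff_distrib)
  moreover have "2 * mom b (k+2) = 2 * half_moment (k+2) - 2 * integral {0..b} (sym_gauss (k+2))"
    using mom_eq_half_moment_minus[OF b, of "k+2"] by simp
  ultimately show ?thesis
    using half_moment_rec[of k] sym_gauss_integral_rec[of b k] b by (simp add: algebra_simps)
qed

lemma ip_pderiv: assumes b: "b > 0"
  shows "ip b (pderiv p) 1 = 2 * ip b (pCons 0 p) 1 + exp (- b\<^sup>2) * (poly p (-b) - poly p b)"
proof -
  define T where "T p = ip b (pderiv p) 1 - 2 * ip b (pCons 0 p) 1 - exp (- b\<^sup>2) * (poly p (-b) - poly p b)" for p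
  have T_add: "T (x + y) = T x + T y" for x y
  proof -
    have "ip b (pCons 0 (x + y)) 1 = ip b (pCons 0 x) 1 + ip b (pCons 0 y) 1"
      using ip_add_left[of b "pCons 0 x" "pCons 0 y" 1] by simp
    then show ?thesis unfolding T_def by (simp add: pderiv_add ip_add_left algebra_simps)
  qed
  have T_smult: "T (smult c x) = c * T x" for c x
  proof -
    have "ip b (pCons 0 (smult c x)) 1 = c * ip b (pCons 0 x) 1"
      using ip_smult_left[of b c "pCons 0 x" 1] by simp
    then show ?thesis unfolding T_def by (simp add: pderiv_smult ip_smult_left algebra_simps)
  qed
  have T_monom: "T (monom 1 i) = 0" for i
  proof (cases i)
    case 0
    have "pCons 0 (1::real poly) = monom 1 1" by (simp add: monom_Suc)
    then show ?thesis using 0 mom_odd[of 1 b] by (simp add: T_def pderiv_monom ip_monom_one poly_monom)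
  next
    case (Suc m)
    then show ?thesis using mom_rec[OF b, of m]
      by (simp add: T_def pderiv_monom monom_Suc[symmetric] ip_monom_one poly_monom algebra_simps)
  qed
  have "T p = T (\<Sum>i\<le>degree p. smult (coeff p i) (monom 1 i))"
    by (simp add: smult_monom poly_as_sum_of_monoms)
  also have "\<dots> = (\<Sum>i\<le>degree p. T (smult (coeff p i) (monom 1 i)))"
    using sum_comp_morphism[of T "\<lambda>i. smult (coeff p i) (monom 1 i)" "{..degree p}", OF _ T_add]
    by (simp add: comp_def T_def)
  also have "\<dots> = 0" by (simp add: T_smult T_monom)
  finally show ?thesis unfolding T_def by simp
qed

text \<open>\<open>x P\<^sub>m(x)\<^sup>2 w(x)\<close> is odd.\<close>
lemma ip_GS_x_GS: "ip b (GS b m) (pCons 0 (GS b m)) = 0"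
proof -
  have "ip b (GS b m) (pCons 0 (GS b m)) = (LINT x|lborel. x * (poly (GS b m) x * poly (GS b m) x * wt b x))"
    unfolding ip_def by (simp add: ac_simps)
  also have "\<dots> = 0"
  proof (rule lint_odd)
    fix x :: real
    have "(-1::real) ^ m * (-1) ^ m = 1" by (simp flip: power_mult_distrib)
    then show "- x * (poly (GS b m) (- x) * poly (GS b m) (- x) * wt b (- x))
             = - (x * (poly (GS b m) x * poly (GS b m) x * wt b x))"
      by (simp add: GS_parity wt_even algebra_simps)
  qed
  finally show ?thesis .
qed

text \<open>\<open>x P\<^sub>m\<close> is monic of degree \<open>m+1\<close>, so its component along \<open>P\<^sub>{m+1}\<close> is \<open>h\<^sub>{m+1}\<close>.\<close>
lemma ip_x_GS_GS_Suc: "ip b (pCons 0 (GS b m)) (GS b (Suc m)) = ip b (GS b (Suc m)) (GS b (Suc m))"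
  using GS_component[of "pCons 0 (GS b m)" "Suc m" b] by (simp add: GS_nonzero)

text \<open>Three-term relation \<open>x P\<^sub>{n-1} = P\<^sub>n + (h\<^sub>{n-1}/h\<^sub>{n-2}) P\<^sub>{n-2}\<close> (no term in \<open>P\<^sub>{n-1}\<close>
  since the weight is even), evaluated at \<open>a\<close>.\<close>
lemma three_term: assumes n: "n \<ge> 2"
  shows "poly (GS b (n-2)) a * ip b (GS b (n-1)) (GS b (n-1))
       = (a * poly (GS b (n-1)) a - poly (GS b n) a) * ip b (GS b (n-2)) (GS b (n-2))"
proof -
  define h where "h m = ip b (GS b m) (GS b m)" for m
  define \<beta> where "\<beta> = h (n-1) / h (n-2)"
  define R where "R = pCons 0 (GS b (n-1)) - GS b n - smult \<beta> (GS b (n-2))"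
  have h_pos: "h m > 0" for m unfolding h_def by (rule GS_norm_pos)
  have n1: "Suc (n-1) = n" "Suc (n-2) = n-1" using n by auto
  have "degree R \<le> n"
    unfolding R_def using n
    by (intro degree_diff_le) (auto simp: GS_nonzero intro: order.trans[OF degree_smult_le])
  moreover have "\<forall>j\<le>n. ip b R (GS b j) = 0"
  proof (intro allI impI)
    fix j assume j: "j \<le> n"
    have R_j: "ip b R (GS b j) = ip b (GS b (n-1)) (pCons 0 (GS b j))
        - ip b (GS b n) (GS b j) - \<beta> * ip b (GS b (n-2)) (GS b j)"
      unfolding R_def by (simp add: ip_diff_left ip_smult_left ip_shift)
    consider "j < n-2" | "j = n-2" | "j = n-1" | "j = n" using j n by linarith
    then show "ip b R (GS b j) = 0"
    proof cases
      case 1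
      have "ip b (GS b (n-1)) (pCons 0 (GS b j)) = 0"
        by (rule GS_ortho_low) (use 1 n in \<open>simp add: GS_nonzero\<close>)
      then show ?thesis using R_j GS_ortho[of j n b] GS_ortho[of j "n-2" b] 1 by simp
    next
      case 2
      have "ip b (GS b (n-1)) (pCons 0 (GS b j)) = h (n-1)"
        using ip_x_GS_GS_Suc[of b "n-2"] n1 2 unfolding h_def by (simp add: ip_sym)
      moreover have "\<beta> * ip b (GS b (n-2)) (GS b j) = h (n-1)"
        using 2 h_pos[of "n-2"] unfolding \<beta>_def h_def by simp
      ultimately show ?thesis using R_j GS_ortho[of j n b] 2 n by simp
    next
      case 3
      then show ?thesis using R_j ip_GS_x_GS[of b "n-1"] GS_ortho[of j n b] GS_ortho[of "n-2" j b] n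
        by (simp add: ip_sym)
    next
      case 4
      have "ip b (GS b (n-1)) (pCons 0 (GS b j)) = h n"
        using ip_x_GS_GS_Suc[of b "n-1"] n1 4 unfolding h_def by (simp add: ip_sym ip_shift)
      then show ?thesis using R_j GS_ortho[of "n-2" j b] 4 n unfolding h_def by (simp add: ip_sym)
    qed
  qed
  ultimately have "R = 0" by (rule GS_complete)
  then have "poly R a = 0" by simp
  then have "a * poly (GS b (n-1)) a - poly (GS b n) a = \<beta> * poly (GS b (n-2)) a"
    unfolding R_def by simp
  then show ?thesis using h_pos[of "n-2"] unfolding \<beta>_def h_def by (simp add: field_simps)
qed

text \<open>Norm recursion \<open>2 h\<^sub>n = n h\<^sub>{n-1} + 2 e^{-a^2} P\<^sub>n(a) P\<^sub>{n-1}(a)\<close>: integrate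
  \<open>(P\<^sub>n P\<^sub>{n-1})'\<close> by parts; \<open>P\<^sub>n P\<^sub>{n-1}\<close> is odd, so the boundary terms add up.\<close>
lemma norm_rec: assumes a: "a > 0" and n: "n \<ge> 1"
  shows "2 * ip a (GS a n) (GS a n)
       = real n * ip a (GS a (n-1)) (GS a (n-1)) + 2 * exp (- a\<^sup>2) * poly (GS a n) a * poly (GS a (n-1)) a"
proof -
  define P where "P = GS a n"
  define Q where "Q = GS a (n-1)"
  have n1: "Suc (n-1) = n" using n by auto
  have "ip a (P * pderiv Q) 1 = 0"
    unfolding ip_mult_one P_def Q_def by (rule GS_ortho_low) (use n in \<open>simp add: degree_pderiv\<close>)
  moreover have "ip a (Q * pderiv P) 1 = real n * ip a Q Q"
  proof -
    have "ip a (Q * pderiv P) 1 = ip a (pderiv P) Q" by (simp only: ip_mult_one ip_sym[of a Q])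
    also have "\<dots> = coeff (pderiv P) (n-1) * ip a Q Q"
      unfolding Q_def by (rule GS_component) (simp add: P_def degree_pderiv)
    moreover have "coeff (pderiv P) (n-1) = real n"
      unfolding P_def using n1 by (simp add: coeff_pderiv)
    ultimately show ?thesis by simp
  qed
  ultimately have lhs: "ip a (pderiv (P * Q)) 1 = real n * ip a Q Q"
    by (simp add: pderiv_mult ip_add_left)
  have "pCons 0 (P * Q) = P * pCons 0 Q" by simp
  then have "ip a (pCons 0 (P * Q)) 1 = ip a P (pCons 0 Q)" by (simp only: ip_mult_one)
  also have "\<dots> = ip a (pCons 0 Q) P" by (rule ip_sym)
  also have "\<dots> = ip a P P" unfolding P_def Q_def using ip_x_GS_GS_Suc[of a "n-1"] n1 by simp
  finally have mid: "ip a (pCons 0 (P * Q)) 1 = ip a P P" .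
  have "poly (P * Q) (-a) = ((-1)^n * (-1)^(n-1)) * (poly P a * poly Q a)"
    unfolding P_def Q_def by (simp add: GS_parity algebra_simps)
  then have boundary: "poly (P * Q) (-a) - poly (P * Q) a = - 2 * (poly P a * poly Q a)"
    using sign_pow_diff_odd[OF n] by simp
  have "real n * ip a Q Q = 2 * ip a P P + exp (- a\<^sup>2) * (- 2 * (poly P a * poly Q a))"
    using ip_pderiv[OF a, of "P * Q"] unfolding lhs mid boundary .
  then show ?thesis unfolding P_def Q_def by (simp add: algebra_simps)
qed

text \<open>The coefficients of \<open>GS b n\<close> are built from moments
  by ring operations and divisions by positive norms, hence are differentiable in \<open>b > 0\<close>.\<close>

lemma ip_differentiable:
  assumes a: "a > 0" and deg_p: "\<And>b. degree (p b) \<le> N" and deg_q: "\<And>b. degree (q b) \<le> N"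
    and diff_p: "\<And>i. (\<lambda>b. coeff (p b) i) differentiable (at a)"
    and diff_q: "\<And>i. (\<lambda>b. coeff (q b) i) differentiable (at a)"
  shows "(\<lambda>b. ip b (p b) (q b)) differentiable (at a)"
proof -
  have "(\<lambda>b. \<Sum>j\<le>N. \<Sum>i\<le>N. coeff (q b) j * coeff (p b) i * mom b (i+j)) differentiable (at a)"
    by (intro differentiable_sum ballI finite_atMost differentiable_mult diff_p diff_q mom_differentiable a)
  then show ?thesis by (simp only: ip_coeffs[OF deg_p deg_q])
qed

lemma GS_coeff_differentiable: assumes a: "a > 0" shows "(\<lambda>b. coeff (GS b n) i) differentiable (at a)"
proof (induction n arbitrary: i rule: less_induct)
  case (less n)
  have ip_diff: "(\<lambda>b. ip b (p b) (GS b j)) differentiable (at a)"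
    if "j < n" "\<And>b. degree (p b) \<le> n" "\<And>i. (\<lambda>b. coeff (p b) i) differentiable (at a)" for j p
    by (rule ip_differentiable[OF a, where N = n]) (use that less.IH in auto)
  have "(\<lambda>b. coeff (monom 1 n) i
      - (\<Sum>j<n. ip b (monom 1 n) (GS b j) / ip b (GS b j) (GS b j) * coeff (GS b j) i)) differentiable (at a)"
  proof (intro differentiable_diff differentiable_const differentiable_sum ballI finite_lessThan
         differentiable_mult differentiable_divide)
    fix j assume j: "j \<in> {..<n}"
    show "(\<lambda>b. ip b (monom 1 n) (GS b j)) differentiable (at a)"
      by (rule ip_diff) (use j in \<open>auto simp: degree_monom_le\<close>)
    show "(\<lambda>b. ip b (GS b j) (GS b j)) differentiable (at a)"
      by (rule ip_diff) (use j less.IH in auto)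
    show "(\<lambda>b. coeff (GS b j) i) differentiable (at a)" using j less.IH by auto
    show "ip a (GS a j) (GS a j) \<noteq> 0" using GS_norm_pos[of a j] by simp
  qed
  moreover have "coeff (GS b n) i = coeff (monom 1 n) i
      - (\<Sum>j<n. ip b (monom 1 n) (GS b j) / ip b (GS b j) (GS b j) * coeff (GS b j) i)" for b
    by (subst GS.simps) (simp add: coeff_sum)
  ultimately show ?case by simp
qed

definition dGS :: "real \<Rightarrow> nat \<Rightarrow> real poly" where
  "dGS a n = (\<Sum>i\<le>n. monom (deriv (\<lambda>b. coeff (GS b n) i) a) i)"

lemma coeff_dGS: "coeff (dGS a n) i = (if i \<le> n then deriv (\<lambda>b. coeff (GS b n) i) a else 0)"
  unfolding dGS_def by (simp add: coeff_sum)

lemma GS_coeff_deriv: assumes a: "a > 0" and i: "i \<le> n"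
  shows "((\<lambda>b. coeff (GS b n) i) has_real_derivative coeff (dGS a n) i) (at a)"
  using GS_coeff_differentiable[OF a] i by (simp add: coeff_dGS DERIV_deriv_iff_real_differentiable)

text \<open>The leading coefficient is constantly 1, so \<open>dGS a n\<close> has degree below \<open>n\<close>.\<close>
lemma degree_dGS: assumes a: "a > 0" shows "degree (dGS a n) \<le> n - 1"
proof (rule degree_le, intro allI impI)
  fix i assume i: "n - 1 < i"
  have "((\<lambda>b. coeff (GS b n) n) has_real_derivative coeff (dGS a n) n) (at a)"
    by (rule GS_coeff_deriv[OF a]) simp
  then have "coeff (dGS a n) n = 0" by (simp add: DERIV_unique)
  then show "coeff (dGS a n) i = 0" using i by (cases "i = n") (auto simp: coeff_dGS)
qed

text \<open>Differentiating \<open>ip b (GS b n) q = 0\<close> (for \<open>deg q < n\<close>) in \<open>b\<close>: the moments contribute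
  the boundary values at \<open>\<plusminus>a\<close>.\<close>
lemma ip_dGS_monom: assumes a: "a > 0" and k: "k < n"
  shows "ip a (dGS a n) (monom 1 k)
       = exp (- a\<^sup>2) * (poly (GS a n) a * a ^ k + poly (GS a n) (-a) * (-a) ^ k)"
proof -
  define c where "c i b = coeff (GS b n) i" for i b
  define c' where "c' i = coeff (dGS a n) i" for i
  have "(\<lambda>b. \<Sum>i\<le>n. c i b * mom b (i+k)) = (\<lambda>_. 0)"
  proof
    fix b
    have "ip b (GS b n) (monom 1 k) = 0"
      by (rule GS_ortho_low) (use k in \<open>simp add: degree_monom_eq\<close>)
    then show "(\<Sum>i\<le>n. c i b * mom b (i+k)) = 0" unfolding c_def using ip_monom[of "GS b n" n b k] by simp
  qed
  moreover have "((\<lambda>b. \<Sum>i\<le>n. c i b * mom b (i+k)) has_real_derivative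
      (\<Sum>i\<le>n. c i a * (- sym_gauss (i+k) a) + c' i * mom a (i+k))) (at a)"
    unfolding c_def c'_def by (intro DERIV_sum DERIV_mult' GS_coeff_deriv mom_deriv a) simp
  ultimately have "(\<Sum>i\<le>n. c i a * (- sym_gauss (i+k) a) + c' i * mom a (i+k)) = 0"
    by (simp add: DERIV_unique)
  then have "(\<Sum>i\<le>n. c' i * mom a (i+k)) = (\<Sum>i\<le>n. c i a * sym_gauss (i+k) a)"
    by (simp add: sum.distrib sum_negf sum_subtractf)
  also have "\<dots> = exp (- a\<^sup>2) * ((\<Sum>i\<le>n. c i a * a ^ i) * a ^ k + (\<Sum>i\<le>n. c i a * (-a) ^ i) * (-a) ^ k)"
    unfolding sym_gauss_def by (simp add: sum_distrib_left sum_distrib_right power_add algebra_simps sum.distrib)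
  also have "\<dots> = exp (- a\<^sup>2) * (poly (GS a n) a * a ^ k + poly (GS a n) (-a) * (-a) ^ k)"
    unfolding c_def by (simp add: poly_as_sum_upto[of "GS a n" n])
  finally show ?thesis
    using ip_monom[of "dGS a n" n a k] degree_dGS[OF a, of n] unfolding c'_def by simp
qed

lemma ip_dGS: assumes a: "a > 0" and q: "degree q < n"
  shows "ip a (dGS a n) q = exp (- a\<^sup>2) * (poly (GS a n) a * poly q a + poly (GS a n) (-a) * poly q (-a))"
proof -
  have "ip a (dGS a n) q = (\<Sum>k\<le>degree q. coeff q k * ip a (dGS a n) (monom 1 k))"
    by (rule ip_expand_right) simp
  also have "\<dots> = (\<Sum>k\<le>degree q. coeff q k * (exp (- a\<^sup>2) * (poly (GS a n) a * a ^ k + poly (GS a n) (-a) * (-a) ^ k)))"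
    using ip_dGS_monom[OF a] q by (intro sum.cong refl) auto
  also have "\<dots> = exp (- a\<^sup>2) * (poly (GS a n) a * (\<Sum>k\<le>degree q. coeff q k * a ^ k)
                    + poly (GS a n) (-a) * (\<Sum>k\<le>degree q. coeff q k * (-a) ^ k))"
    by (simp add: sum_distrib_left algebra_simps sum.distrib)
  also have "\<dots> = exp (- a\<^sup>2) * (poly (GS a n) a * poly q a + poly (GS a n) (-a) * poly q (-a))"
    by (simp add: poly_altdef)
  finally show ?thesis .
qed

text \<open>The first equality: against \<open>GS a (n-1)\<close> the boundary terms cancel by parity, so
  \<open>dGS a n\<close> has degree \<open>\<le> n-2\<close>; against \<open>GS a (n-2)\<close> they add up, giving its top coefficient.\<close>
lemma GS_subleading_deriv: assumes a: "a > 0" and n: "n \<ge> 2"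
  shows "((\<lambda>b. coeff (GS b n) (n-2)) has_real_derivative
     2 * exp (- a\<^sup>2) * poly (GS a n) a * poly (GS a (n-2)) a / ip a (GS a (n-2)) (GS a (n-2))) (at a)"
proof -
  define Q where "Q = dGS a n"
  define e where "e = exp (- a\<^sup>2)"
  have "ip a Q (GS a (n-1)) = e * poly (GS a n) a * poly (GS a (n-1)) a * (1 + (-1)^n * (-1)^(n-1))"
    using ip_dGS[OF a, of "GS a (n-1)" n] n unfolding Q_def e_def
    by (simp add: GS_parity algebra_simps)
  then have "ip a Q (GS a (n-1)) = 0" using sign_pow_diff_odd[of n] n by simp
  then have "coeff Q (n-1) = 0"
    using GS_component[OF degree_dGS[OF a], of a] GS_norm_pos[of a "n-1"] unfolding Q_def by simp
  moreover have "degree Q \<le> n - 1" unfolding Q_def by (rule degree_dGS[OF a])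
  ultimately have deg_Q: "degree Q \<le> n - 2"
    using n by (cases "degree Q = n - 1") (metis leading_coeff_0_iff degree_0 zero_le, simp)
  have "ip a Q (GS a (n-2)) = e * poly (GS a n) a * poly (GS a (n-2)) a * (1 + (-1)^n * (-1)^(n-2))"
    using ip_dGS[OF a, of "GS a (n-2)" n] n unfolding Q_def e_def
    by (simp add: GS_parity algebra_simps)
  then have "coeff Q (n-2) * ip a (GS a (n-2)) (GS a (n-2)) = 2 * e * poly (GS a n) a * poly (GS a (n-2)) a"
    using sign_pow_diff_even[OF n] GS_component[OF deg_Q] by simp
  then have "coeff Q (n-2) = 2 * e * poly (GS a n) a * poly (GS a (n-2)) a / ip a (GS a (n-2)) (GS a (n-2))"
    using GS_norm_pos[of a "n-2"] by (simp add: field_simps)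
  then show ?thesis using GS_coeff_deriv[OF a, of "n-2" n] unfolding Q_def e_def by simp
qed

text \<open>The second equality is an algebraic consequence of the three-term relation and the
  norm recursion, with \<open>Pi = P\<^sub>{n-i}(a)\<close>, \<open>hi = h\<^sub>{n-i}\<close>, \<open>e = e^{-a^2}\<close>.\<close>
lemma derivative_formula_algebra:
  fixes a e P0 P1 P2 h0 h1 h2 :: real
  assumes pos: "h0 > 0" "h1 > 0" "h2 > 0"
    and three_term: "P2 * h1 = (a * P1 - P0) * h2"
    and norm_rec: "2 * h0 = real n * h1 + 2 * e * P0 * P1"
  shows "2 * e * P0 * P2 / h2 = a * (2 * e * P0 * P1 / h1) - (real n + 2 * e * P0 * P1 / h1) / 2 * (2 * e * P0 ^ 2 / h0)"
proof -
  have ratio: "P2 / h2 = (a * P1 - P0) / h1" using three_term pos by (simp add: field_simps)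
  have "(real n + 2 * e * P0 * P1 / h1) / 2 = (real n * h1 + 2 * e * P0 * P1) / (2 * h1)"
    using pos by (simp add: field_simps)
  then have factor: "(real n + 2 * e * P0 * P1 / h1) / 2 = h0 / h1"
    unfolding norm_rec[symmetric] using pos by simp
  have "2 * e * P0 * P2 / h2 = 2 * e * P0 * (P2 / h2)" by simp
  also have "\<dots> = a * (2 * e * P0 * P1 / h1) - h0 / h1 * (2 * e * P0 ^ 2 / h0)"
    unfolding ratio using pos by (simp add: field_simps power2_eq_square)
  finally show ?thesis unfolding factor .
qed

theorem mainTheorem7:
  fixes n :: nat and a :: real
  assumes "n \<ge> 2" and "a > 0"
  shows "((\<lambda>b. pco n b) has_real_derivative
            (2 * exp (- (a^2)) * poly (OP a n) a * poly (OP a (n - 2)) a / hn a (n - 2))) (at a)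
       \<and> 2 * exp (- (a^2)) * poly (OP a n) a * poly (OP a (n - 2)) a / hn a (n - 2)
           = a * rn n a - (real n + rn n a) / 2 * Rn n a"
proof
  have hn_ip: "hn a m = ip a (GS a m) (GS a m)" for m
    unfolding hn_def ip_def OP_eq_GS by (simp add: power2_eq_square)
  show "((\<lambda>b. pco n b) has_real_derivative
            (2 * exp (- (a^2)) * poly (OP a n) a * poly (OP a (n - 2)) a / hn a (n - 2))) (at a)"
    unfolding pco_def hn_ip OP_eq_GS using GS_subleading_deriv[OF assms(2,1)] by simp
  have "n \<ge> 1" using assms(1) by simp
  show "2 * exp (- (a^2)) * poly (OP a n) a * poly (OP a (n - 2)) a / hn a (n - 2)
           = a * rn n a - (real n + rn n a) / 2 * Rn n a"
    unfolding rn_def Rn_def hn_ip OP_eq_GS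
    by (rule derivative_formula_algebra[OF GS_norm_pos GS_norm_pos GS_norm_pos
          three_term[OF assms(1)] norm_rec[OF assms(2) \<open>n \<ge> 1\<close>]])
qed

end
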